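(* Let $G$ be a connected graph of order $n$ with maximum degree $\Delta\ge 3$. (i) If $2\Delta\le n-1$, then $$SO(G)\ge \Delta\left(\sqrt{\Delta^2+4}+\sqrt5\right)+2(n-2\Delta-1)\sqrt2,$$ with equality if and only if $G$ is a star-like tree of order $n$ with maximum degree $\Delta$ in which every neighbor of the maximum-degree vertex has degree two. (ii) If $2\Delta> n-1$, then $$SO(G)\ge (n-1-\Delta)\left(\sqrt{\Delta^2+4}+\sqrt5\right)+(2\Delta-n+1)\sqrt{\Delta^2+1},$$ with equality if and only if $G$ is a star-like tree of order $n$ with maximum degree $\Delta$ in which the maximum-degree vertex has exactly $2\Delta-n+1$ neighbors of degree one.
   Context: For a graph $G$, $d_G(w)$ denotes the degree of vertex $w$, and the Sombor index is $SO(G)=\sum_{ab\in E(G)}\sqrt{d_G(a)^2+d_G(b)^2}$. A star-like tree is a tree having exactly one vertex of degree greater than two. *)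

theory Defs
  imports Complex_Main
begin

definition simple_graph :: "'a set \<Rightarrow> 'a set set \<Rightarrow> bool" where
  "simple_graph V E \<longleftrightarrow> finite V \<and> (\<forall>e\<in>E. e \<subseteq> V \<and> card e = 2)"

definition adj :: "'a set set \<Rightarrow> 'a \<Rightarrow> 'a \<Rightarrow> bool" where
  "adj E u v \<longleftrightarrow> {u, v} \<in> E \<and> u \<noteq> v"

definition deg :: "'a set set \<Rightarrow> 'a \<Rightarrow> nat" where
  "deg E v = card {e \<in> E. v \<in> e}"

definition max_deg :: "'a set \<Rightarrow> 'a set set \<Rightarrow> nat" where
  "max_deg V E = Max (deg E ` V)"

definition connected_graph :: "'a set \<Rightarrow> 'a set set \<Rightarrow> bool" where
  "connected_graph V E \<longleftrightarrow> V \<noteq> {} \<and> (\<forall>u\<in>V. \<forall>v\<in>V. (adj E)\<^sup>*\<^sup>* u v)"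

definition is_tree :: "'a set \<Rightarrow> 'a set set \<Rightarrow> bool" where
  "is_tree V E \<longleftrightarrow> connected_graph V E \<and> card E + 1 = card V"

definition star_like_tree :: "'a set \<Rightarrow> 'a set set \<Rightarrow> bool" where
  "star_like_tree V E \<longleftrightarrow> is_tree V E \<and> card {v \<in> V. deg E v > 2} = 1"

text \<open>Sombor index: sum over edges ab of sqrt(d(a)^2 + d(b)^2); for an edge e = {a,b}
with a \<noteq> b, the inner sum over v \<in> e is exactly d(a)^2 + d(b)^2.\<close>
definition sombor :: "'a set set \<Rightarrow> real" where
  "sombor E = (\<Sum>e\<in>E. sqrt (\<Sum>v\<in>e. (real (deg E v))\<^sup>2))"

end

theory Submission
  imports Defs
begin

(* Root a breadth-first spanning tree at a vertex w of maximum degree \<Delta>. Every other vertex v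
   owns the tree edge {v, p v} to its parent, and the remaining edges only add positive terms, so
   SO(G) is at least the sum over v of sqrt(d(v)^2 + d(p v)^2). This sum is bounded vertex by vertex
   after discharging: every non-root vertex of degree at least 3 hands a fixed amount \<delta> to each
   of its children. With \<delta> = 2 sqrt 2 - sqrt 5 for (i) and \<delta> = sqrt(\<Delta>^2+4) - sqrt(\<Delta>^2+1)
   for (ii) each vertex keeps a nonnegative slack, and all slacks vanish (and there are no non-tree
   edges) exactly for the extremal star-like trees. Neither argument uses the comparison of 2\<Delta>
   with n - 1: both bounds hold for every connected graph with \<Delta> \<ge> 3. *)

lemma sqrt_numeral_bounds:
  "2236/1000 < sqrt 5" "sqrt 5 < 22361/10000" "14142/10000 < sqrt 2" "sqrt 2 < 14143/10000"
  "3162/1000 < sqrt 10" "36055/10000 < sqrt 13"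
  by (rule real_less_rsqrt real_less_lsqrt; simp add: power2_eq_square)+

lemma sqrt_add_4_minus_sqrt_add_1_bounds:
  fixes D :: real
  assumes "3 \<le> D"
  shows "0 < sqrt (D\<^sup>2 + 4) - sqrt (D\<^sup>2 + 1)"
    and "sqrt (D\<^sup>2 + 4) - sqrt (D\<^sup>2 + 1) < 2 * sqrt 2 - sqrt 5"
proof -
  define s t where "s = sqrt (D\<^sup>2 + 4)" and "t = sqrt (D\<^sup>2 + 1)"
  have "9 \<le> D\<^sup>2"
    using power_mono[OF assms, of 2] by simp
  then have "sqrt 13 \<le> s" "sqrt 10 \<le> t"
    unfolding s_def t_def by simp_all
  then have st: "67675/10000 < s + t"
    using sqrt_numeral_bounds by simp
  have "(s - t) * (s + t) = 3"
    unfolding s_def t_def by (simp add: algebra_simps)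
  then have diff: "s - t = 3 / (s + t)"
    using st by (simp add: field_simps)
  then show "0 < s - t"
    using st by simp
  have "3 / (s + t) < 3 / (67675/10000)"
    using st by (intro divide_strict_left_mono) auto
  then show "s - t < 2 * sqrt 2 - sqrt 5"
    using diff sqrt_numeral_bounds by simp
qed

lemma sqrt_8: "sqrt 8 = 2 * sqrt 2"
  using real_sqrt_mult[of 4 2] by simp

lemma sqrt_sum_squares_mono:
  fixes a b k q :: nat
  assumes "a \<le> k" "b \<le> q"
  shows "sqrt ((real a)\<^sup>2 + (real b)\<^sup>2) \<le> sqrt ((real k)\<^sup>2 + (real q)\<^sup>2)"
  using assms by (intro real_sqrt_le_mono add_mono power_mono) simp_all

lemma diff_nonneg_iff_of_if:
  fixes L R :: real
  assumes "if P then L = R else L < R"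
  shows "0 \<le> R - L \<and> (R - L = 0 \<longleftrightarrow> P)"
  using assms by (auto split: if_splits)

(* In the next four lemmas k is the degree of a non-root vertex, q the degree of its parent and
   c its number of children, whence c + 1 \<le> k. *)

lemma root_child_ineq_i:
  fixes D \<delta> :: real and k c :: nat
  assumes "c + 1 \<le> k" and "sqrt (D\<^sup>2 + 4) - sqrt (D\<^sup>2 + 1) < \<delta>"
  defines "L \<equiv> sqrt (D\<^sup>2 + 4) - \<delta> + \<delta> * real c"
    and "R \<equiv> sqrt ((real k)\<^sup>2 + D\<^sup>2) + (if 3 \<le> k then \<delta> * real c else 0)"
  shows "if k = 2 \<and> c = 1 then L = R else L < R"
proof -
  have "0 < \<delta>"
    using assms(2) real_sqrt_less_mono[of "D\<^sup>2 + 1" "D\<^sup>2 + 4"] by linarith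
  consider "k = 1" "c = 0" | "k = 2" "c = 0" | "k = 2" "c = 1" | "3 \<le> k"
    using assms(1) by linarith
  then show ?thesis
  proof cases
    case 4
    have "(real 2)\<^sup>2 < (real k)\<^sup>2"
      using 4 by (intro power_strict_mono) auto
    then have "sqrt (D\<^sup>2 + 4) < sqrt ((real k)\<^sup>2 + D\<^sup>2)"
      by (intro real_sqrt_less_mono) simp
    moreover have "R = sqrt ((real k)\<^sup>2 + D\<^sup>2) + \<delta> * real c"
      using 4 by (simp add: R_def)
    ultimately have "L < R"
      using \<open>0 < \<delta>\<close> unfolding L_def by (simp add: algebra_simps del: real_sqrt_less_iff)
    then show ?thesis
      using 4 by simp
  qed (use assms \<open>0 < \<delta>\<close> in \<open>auto simp: L_def R_def add.commute\<close>)
qed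

lemma deeper_ineq_i:
  fixes k q c :: nat
  assumes "c + 1 \<le> k" and "2 \<le> q"
  defines "\<delta> \<equiv> 2 * sqrt 2 - sqrt 5"
  defines "L \<equiv> sqrt 5 + \<delta> * real c"
    and "R \<equiv> sqrt ((real k)\<^sup>2 + (real q)\<^sup>2) - (if 3 \<le> q then \<delta> else 0)
              + (if 3 \<le> k then \<delta> * real c else 0)"
  shows "if q = 2 \<and> (k = 1 \<or> k = 2 \<and> c = 1) then L = R else L < R"
proof -
  note bounds = sqrt_numeral_bounds
  have \<delta>: "59/100 < \<delta>" "\<delta> < 6/10"
    using bounds unfolding \<delta>_def by simp_all
  have q3: "sqrt 10 \<le> sqrt ((real k)\<^sup>2 + (real q)\<^sup>2)"
    "2 \<le> k \<Longrightarrow> sqrt 13 \<le> sqrt ((real k)\<^sup>2 + (real q)\<^sup>2)" if "3 \<le> q"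
    using sqrt_sum_squares_mono[of 1 k 3 q] sqrt_sum_squares_mono[of 2 k 3 q] assms(1) that
    by simp_all
  consider "k = 1" "c = 0" | "k = 2" "c = 0" | "k = 2" "c = 1" | "3 \<le> k"
    using assms(1) by linarith
  then show ?thesis
  proof cases
    case 4
    have "sqrt 13 \<le> sqrt ((real k)\<^sup>2 + (real q)\<^sup>2)"
      using sqrt_sum_squares_mono[of 3 k 2 q] 4 assms(2) by simp
    moreover have "R \<ge> sqrt ((real k)\<^sup>2 + (real q)\<^sup>2) - \<delta> + \<delta> * real c"
      using 4 \<delta> by (simp add: R_def)
    ultimately have "L < R"
      using bounds \<delta> unfolding L_def by linarith
    then show ?thesis
      using 4 by simp
  qed (cases "q = 2"; use q3 assms(2) bounds \<delta> sqrt_8 in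
        \<open>simp add: L_def R_def \<delta>_def del: real_sqrt_le_iff\<close>)+
qed

lemma root_child_ineq_ii:
  fixes D :: real and k c :: nat
  assumes "c + 1 \<le> k"
  defines "\<gamma> \<equiv> sqrt (D\<^sup>2 + 4) - sqrt (D\<^sup>2 + 1)"
  defines "L \<equiv> sqrt (D\<^sup>2 + 1) + \<gamma> * real c"
    and "R \<equiv> sqrt ((real k)\<^sup>2 + D\<^sup>2) + (if 3 \<le> k then \<gamma> * real c else 0)"
  shows "if k = 1 \<or> k = 2 \<and> c = 1 then L = R else L < R"
proof -
  have "sqrt (D\<^sup>2 + 1) < sqrt (D\<^sup>2 + 4)"
    by (intro real_sqrt_less_mono) simp
  consider "k = 1" "c = 0" | "k = 2" "c = 0" | "k = 2" "c = 1" | "3 \<le> k"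
    using assms(1) by linarith
  then show ?thesis
  proof cases
    case 4
    have "(real 1)\<^sup>2 < (real k)\<^sup>2"
      using 4 by (intro power_strict_mono) auto
    then have "sqrt (D\<^sup>2 + 1) < sqrt ((real k)\<^sup>2 + D\<^sup>2)"
      by (intro real_sqrt_less_mono) simp
    moreover have "R = sqrt ((real k)\<^sup>2 + D\<^sup>2) + \<gamma> * real c"
      using 4 by (simp add: R_def)
    ultimately have "L < R"
      unfolding L_def by linarith
    then show ?thesis
      using 4 by simp
  qed (use \<open>sqrt (D\<^sup>2 + 1) < sqrt (D\<^sup>2 + 4)\<close> in \<open>simp_all add: L_def R_def \<gamma>_def add.commute\<close>)
qed

lemma deeper_ineq_ii:
  fixes \<gamma> :: real and k q c :: nat
  assumes "c + 1 \<le> k" and "2 \<le> q" and "0 < \<gamma>" and "\<gamma> < 2 * sqrt 2 - sqrt 5"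
  defines "L \<equiv> sqrt 5 + \<gamma> * real c"
    and "R \<equiv> sqrt ((real k)\<^sup>2 + (real q)\<^sup>2) - (if 3 \<le> q then \<gamma> else 0)
              + (if 3 \<le> k then \<gamma> * real c else 0)"
  shows "if k = 1 \<and> q = 2 then L = R else L < R"
proof -
  note bounds = sqrt_numeral_bounds
  have q3: "sqrt 10 \<le> sqrt ((real k)\<^sup>2 + (real q)\<^sup>2)"
    "2 \<le> k \<Longrightarrow> sqrt 13 \<le> sqrt ((real k)\<^sup>2 + (real q)\<^sup>2)" if "3 \<le> q"
    using sqrt_sum_squares_mono[of 1 k 3 q] sqrt_sum_squares_mono[of 2 k 3 q] assms(1) that
    by simp_all
  consider "k = 1" "c = 0" | "k = 2" "c = 0" | "k = 2" "c = 1" | "3 \<le> k"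
    using assms(1) by linarith
  then show ?thesis
  proof cases
    case 4
    have "sqrt 13 \<le> sqrt ((real k)\<^sup>2 + (real q)\<^sup>2)"
      using sqrt_sum_squares_mono[of 3 k 2 q] 4 assms(2) by simp
    moreover have "R \<ge> sqrt ((real k)\<^sup>2 + (real q)\<^sup>2) - \<gamma> + \<gamma> * real c"
      using 4 assms(3) by (simp add: R_def)
    ultimately have "L < R"
      using bounds assms(4) unfolding L_def by linarith
    then show ?thesis
      using 4 by simp
  qed (cases "q = 2"; use q3 assms bounds sqrt_8 in
        \<open>simp add: L_def R_def del: real_sqrt_le_iff\<close>)+
qed

lemma simple_graph_finite_edges: "simple_graph V E \<Longrightarrow> finite E"
  unfolding simple_graph_def by (meson PowI finite_Pow_iff finite_subset subsetI)

lemma simple_graph_edgeE: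
  assumes "simple_graph V E" "e \<in> E"
  obtains a b where "e = {a, b}" "a \<noteq> b" "a \<in> V" "b \<in> V"
proof -
  have "e \<subseteq> V" "card e = 2"
    using assms unfolding simple_graph_def by auto
  then show ?thesis
    using that by (metis card_2_iff insert_subset)
qed

lemma adj_sym: "adj E u v \<Longrightarrow> adj E v u"
  unfolding adj_def by (auto simp: insert_commute)

lemma adj_in_V: "simple_graph V E \<Longrightarrow> adj E u v \<Longrightarrow> u \<in> V \<and> v \<in> V"
  unfolding adj_def simple_graph_def by auto

lemma finite_adj: "simple_graph V E \<Longrightarrow> finite {u. adj E v u}"
  using adj_in_V[of V E v] unfolding simple_graph_def
  by (metis (no_types, lifting) finite_subset mem_Collect_eq subsetI)

lemma deg_eq_card_adj:
  assumes "simple_graph V E"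
  shows "deg E v = card {u. adj E v u}"
proof -
  have "{e \<in> E. v \<in> e} = (\<lambda>u. {v, u}) ` {u. adj E v u}"
  proof (intro equalityI subsetI)
    fix e
    assume e: "e \<in> {e \<in> E. v \<in> e}"
    then obtain a b where "e = {a, b}" "a \<noteq> b"
      using simple_graph_edgeE[OF assms] by blast
    with e show "e \<in> (\<lambda>u. {v, u}) ` {u. adj E v u}"
      unfolding adj_def by (auto simp: insert_commute)
  qed (auto simp: adj_def)
  moreover have "inj_on (\<lambda>u. {v, u}) {u. adj E v u}"
    unfolding inj_on_def adj_def by (auto simp: doubleton_eq_iff)
  ultimately show ?thesis
    unfolding deg_def by (simp add: card_image)
qed

(* Since rank decreases along p, no vertex is the parent of its parent and distinct vertices have
   distinct tree edges; adj_root_iff is the breadth-first property that the neighbours of the root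
   are exactly its children. *)

locale bfs_tree =
  fixes V :: "'a set" and E :: "'a set set" and w :: 'a
    and p :: "'a \<Rightarrow> 'a" and rank :: "'a \<Rightarrow> nat"
  assumes simple: "simple_graph V E" and connected: "connected_graph V E"
    and root_in_V: "w \<in> V"
    and parent_adj: "v \<in> V - {w} \<Longrightarrow> adj E v (p v)"
    and rank_parent_less: "v \<in> V - {w} \<Longrightarrow> rank (p v) < rank v"
    and adj_root_iff: "adj E w u \<longleftrightarrow> u \<in> V - {w} \<and> p u = w"

lemma connected_graph_bfs_tree:
  assumes simple: "simple_graph V E" and connected: "connected_graph V E" and w: "w \<in> V"
  obtains p rank where "bfs_tree V E w p rank"
proof -
  define rank where "rank v = (LEAST k. (adj E ^^ k) w v)" for v
  have walk: "(adj E ^^ rank v) w v" if "v \<in> V" for v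
  proof -
    have "(adj E)\<^sup>*\<^sup>* w v"
      using connected w that unfolding connected_graph_def by blast
    then obtain k where "(adj E ^^ k) w v"
      using rtranclp_power by metis
    then show ?thesis
      unfolding rank_def by (rule LeastI)
  qed
  have rank_le: "rank v \<le> k" if "(adj E ^^ k) w v" for v k
    unfolding rank_def using that by (rule Least_le)
  have rank_0: "rank v = 0 \<longleftrightarrow> v = w" if "v \<in> V" for v
    using walk[OF that] rank_le[of 0 w] by (auto elim: relpowp_0_E)
  have "\<forall>v\<in>V - {w}. \<exists>u. adj E v u \<and> rank u < rank v"
  proof
    fix v
    assume v: "v \<in> V - {w}"
    then obtain j where j: "rank v = Suc j"
      using rank_0 not0_implies_Suc by blast
    then have "(adj E ^^ Suc j) w v"
      using walk v by fastforce
    then obtain u where "(adj E ^^ j) w u" "adj E u v"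
      by (rule relpowp_Suc_E)
    then show "\<exists>u. adj E v u \<and> rank u < rank v"
      using rank_le j adj_sym by fastforce
  qed
  then obtain p where p: "\<And>v. v \<in> V - {w} \<Longrightarrow> adj E v (p v) \<and> rank (p v) < rank v"
    by (metis bchoice)
  have "adj E w u \<longleftrightarrow> u \<in> V - {w} \<and> p u = w" for u
  proof
    assume u: "adj E w u"
    then have "u \<in> V - {w}"
      using adj_in_V[OF simple] unfolding adj_def by auto
    moreover have "rank u \<le> 1"
      using u rank_le[of 1 u] by (simp only: relpowp_1)
    ultimately have "rank (p u) = 0" "p u \<in> V"
      using p adj_in_V[OF simple] by fastforce+
    with \<open>u \<in> V - {w}\<close> show "u \<in> V - {w} \<and> p u = w"
      using rank_0 by blast
  qed (use p adj_sym in fastforce)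
  then have "bfs_tree V E w p rank"
    using assms p by unfold_locales auto
  then show ?thesis
    using that by blast
qed

context bfs_tree
begin

definition children :: "'a \<Rightarrow> 'a set" where
  "children x = {v \<in> V - {w}. p v = x}"

definition tree_edge :: "'a \<Rightarrow> 'a set" where
  "tree_edge v = {v, p v}"

lemma finite_V: "finite V"
  using simple unfolding simple_graph_def by simp

lemma finite_children: "finite (children x)"
  unfolding children_def using finite_V by simp

lemma parent_in_V: "v \<in> V - {w} \<Longrightarrow> p v \<in> V"
  using parent_adj adj_in_V[OF simple] by blast

lemma parent_neq: "v \<in> V - {w} \<Longrightarrow> p v \<noteq> v"
  using parent_adj unfolding adj_def by fastforce

lemma parent_not_child:
  assumes "v \<in> V - {w}"
  shows "p v \<notin> children v"
proof
  assume "p v \<in> children v"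
  then have "p v \<in> V - {w}" "p (p v) = v"
    unfolding children_def by auto
  then show False
    using rank_parent_less[OF assms] rank_parent_less[of "p v"] by simp
qed

lemma children_root: "children w = {u. adj E w u}"
  unfolding children_def using adj_root_iff by blast

lemma card_children_root: "card (children w) = deg E w"
  using children_root deg_eq_card_adj[OF simple] by simp

lemma inj_on_tree_edge: "inj_on tree_edge (V - {w})"
proof (rule inj_onI)
  fix x y
  assume x: "x \<in> V - {w}" and y: "y \<in> V - {w}" and "tree_edge x = tree_edge y"
  then have "x = y \<or> x = p y \<and> y = p x"
    unfolding tree_edge_def by (auto simp: doubleton_eq_iff)
  then show "x = y"
    using rank_parent_less[OF x] rank_parent_less[OF y] by auto
qed

lemma sum_tree_edge: "v \<in> V - {w} \<Longrightarrow> sum f (tree_edge v) = f v + f (p v)"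
  using parent_neq[of v] unfolding tree_edge_def by simp

lemma tree_edges_subset: "tree_edge ` (V - {w}) \<subseteq> E"
  using parent_adj unfolding tree_edge_def adj_def by blast

lemma adj_eq_insert_parent_children:
  assumes "E \<subseteq> tree_edge ` (V - {w})" "x \<in> V - {w}"
  shows "{u. adj E x u} = insert (p x) (children x)"
proof (intro equalityI subsetI)
  fix u
  assume "u \<in> {u. adj E x u}"
  then obtain c where "c \<in> V - {w}" "{x, u} = {c, p c}" "x \<noteq> u"
    using assms(1) unfolding adj_def tree_edge_def by auto
  then show "u \<in> insert (p x) (children x)"
    using assms(2) unfolding children_def by (auto simp: doubleton_eq_iff)
qed (use assms(2) parent_adj adj_sym[OF parent_adj] in \<open>auto simp: children_def\<close>)

lemma card_children_less_deg:
  assumes "x \<in> V - {w}"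
  shows "card (children x) + 1 \<le> deg E x"
proof -
  have "insert (p x) (children x) \<subseteq> {u. adj E x u}"
    using assms parent_adj adj_sym[OF parent_adj] unfolding children_def by auto
  then have "card (insert (p x) (children x)) \<le> deg E x"
    using card_mono[OF finite_adj[OF simple]] deg_eq_card_adj[OF simple] by simp
  then show ?thesis
    using parent_not_child[OF assms] finite_children by simp
qed

lemma deg_eq_card_children:
  assumes "E \<subseteq> tree_edge ` (V - {w})" "x \<in> V - {w}"
  shows "deg E x = card (children x) + 1"
  using adj_eq_insert_parent_children[OF assms] deg_eq_card_adj[OF simple]
    parent_not_child[OF assms(2)] finite_children by simp

lemma two_le_deg_parent:
  assumes "v \<in> V - {w}" "p v \<noteq> w"
  shows "2 \<le> deg E (p v)"
proof -
  have "v \<in> children (p v)"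
    using assms(1) unfolding children_def by simp
  then have "1 \<le> card (children (p v))"
    using finite_children by (metis One_nat_def Suc_leI card_gt_0_iff empty_iff)
  then show ?thesis
    using card_children_less_deg[of "p v"] parent_in_V assms by fastforce
qed

lemma sum_over_parents:
  "(\<Sum>v\<in>V - {w}. f (p v)) = (\<Sum>x\<in>V. of_nat (card (children x)) * f x)"
proof -
  have "(\<Sum>v\<in>V - {w}. f (p v)) = (\<Sum>x\<in>V. \<Sum>v\<in>children x. f (p v))"
    using sum.group[OF _ finite_V, of "V - {w}" p "\<lambda>v. f (p v)"] finite_V parent_in_V
    unfolding children_def by (simp add: image_subset_iff)
  also have "\<dots> = (\<Sum>x\<in>V. of_nat (card (children x)) * f x)"
    unfolding children_def by simp
  finally show ?thesis .
qed

lemma card_V: "card V = card (V - {w}) + 1"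
  using card_Suc_Diff1[OF finite_V root_in_V] by simp

lemma sum_card_children:
  "(\<Sum>x\<in>V - {w}. card (children x)) + deg E w = card (V - {w})"
proof -
  have "(\<Sum>x\<in>V. card (children x)) = card (V - {w})"
    using sum_over_parents[of "\<lambda>_. 1 :: nat"] by simp
  then show ?thesis
    using sum.remove[OF finite_V root_in_V, of "\<lambda>x. card (children x)"] card_children_root
    by simp
qed

lemma is_tree_iff: "is_tree V E \<longleftrightarrow> E \<subseteq> tree_edge ` (V - {w})"
proof -
  have "card (tree_edge ` (V - {w})) + 1 = card V"
    using card_image[OF inj_on_tree_edge] card_V by simp
  moreover have "E = tree_edge ` (V - {w}) \<longleftrightarrow> card E = card (tree_edge ` (V - {w}))"
    using card_subset_eq[OF simple_graph_finite_edges[OF simple] tree_edges_subset] by auto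
  ultimately show ?thesis
    using tree_edges_subset connected unfolding is_tree_def by auto
qed

end

lemma sombor_edge_weight_pos:
  assumes "simple_graph V E" "e \<in> E"
  shows "0 < sqrt (\<Sum>v\<in>e. (real (deg E v))\<^sup>2)"
proof -
  obtain a b where ab: "e = {a, b}" "a \<noteq> b"
    using simple_graph_edgeE[OF assms] by blast
  have "e \<in> {e \<in> E. a \<in> e}"
    using assms(2) ab by simp
  then have "0 < deg E a"
    unfolding deg_def using simple_graph_finite_edges[OF assms(1)] card_gt_0_iff by fastforce
  then show ?thesis
    using ab by (simp add: add_pos_nonneg)
qed

locale sombor_bfs = bfs_tree +
  fixes \<Delta> :: nat
  assumes deg_root: "deg E w = \<Delta>" and three_le_deg_root: "3 \<le> \<Delta>"
begin

(* Discharging: a non-root vertex of degree at least 3 sends \<delta> to each of its children; a and b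
   are the parts of the bound charged to a child of the root and to any other non-root vertex. *)

definition slack :: "real \<Rightarrow> real \<Rightarrow> real \<Rightarrow> 'a \<Rightarrow> real" where
  "slack \<delta> a b v = sqrt ((real (deg E v))\<^sup>2 + (real (deg E (p v)))\<^sup>2)
     - (if p v \<noteq> w \<and> 3 \<le> deg E (p v) then \<delta> else 0)
     + (if 3 \<le> deg E v then \<delta> * real (card (children v)) else 0)
     - (if p v = w then a else b) - \<delta> * real (card (children v))"

lemma sombor_eq_slack_sum:
  "sombor E = (\<Sum>e\<in>E - tree_edge ` (V - {w}). sqrt (\<Sum>v\<in>e. (real (deg E v))\<^sup>2))
     + (\<Sum>v\<in>V - {w}. slack \<delta> a b v) + real \<Delta> * a + (real (card V) - 1 - real \<Delta>) * (b + \<delta>)"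
proof -
  let ?T = "tree_edge ` (V - {w})"
  let ?wt = "\<lambda>e. sqrt (\<Sum>v\<in>e. (real (deg E v))\<^sup>2)"
  let ?ch = "\<lambda>v. real (card (children v))"
  define out where "out x = (if x \<noteq> w \<and> 3 \<le> deg E x then \<delta> else 0)" for x
  define base where "base x = (if x = w then a - b else 0)" for x
  have "sombor E = (\<Sum>e\<in>E - ?T. ?wt e) + (\<Sum>e\<in>?T. ?wt e)"
    unfolding sombor_def
    using sum.subset_diff[OF tree_edges_subset simple_graph_finite_edges[OF simple]] by simp
  also have "(\<Sum>e\<in>?T. ?wt e) = (\<Sum>v\<in>V - {w}. ?wt (tree_edge v))"
    using sum.reindex[OF inj_on_tree_edge] by simp
  also have "\<dots> = (\<Sum>v\<in>V - {w}. slack \<delta> a b v + out (p v) - (if 3 \<le> deg E v then \<delta> * ?ch v else 0)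
                     + b + base (p v) + \<delta> * ?ch v)"
    unfolding slack_def out_def base_def by (intro sum.cong) (auto simp: sum_tree_edge)
  also have "\<dots> = (\<Sum>v\<in>V - {w}. slack \<delta> a b v) + (\<Sum>v\<in>V - {w}. out (p v))
      - (\<Sum>v\<in>V - {w}. if 3 \<le> deg E v then \<delta> * ?ch v else 0)
      + real (card (V - {w})) * b + (\<Sum>v\<in>V - {w}. base (p v)) + \<delta> * (\<Sum>v\<in>V - {w}. ?ch v)"
    by (simp add: sum.distrib sum_subtractf sum_distrib_left)
  also have "(\<Sum>v\<in>V - {w}. out (p v)) = (\<Sum>v\<in>V - {w}. if 3 \<le> deg E v then \<delta> * ?ch v else 0)"
    unfolding sum_over_parents sum.remove[OF finite_V root_in_V]
    by (auto simp: out_def intro!: sum.cong split: if_splits)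
  also have "(\<Sum>v\<in>V - {w}. base (p v)) = real \<Delta> * (a - b)"
    unfolding sum_over_parents sum.remove[OF finite_V root_in_V]
    by (simp add: base_def card_children_root deg_root)
  also have "(\<Sum>v\<in>V - {w}. ?ch v) = real (card (V - {w})) - real \<Delta>"
    using arg_cong[OF sum_card_children, of real] deg_root by simp
  finally show ?thesis
    using card_V by (simp add: algebra_simps)
qed

lemma sombor_lower_bound_of_slack:
  assumes slack_nonneg: "\<And>v. v \<in> V - {w} \<Longrightarrow> 0 \<le> slack \<delta> a b v"
  defines "B \<equiv> real \<Delta> * a + (real (card V) - 1 - real \<Delta>) * (b + \<delta>)"
  shows "B \<le> sombor E"
    and "sombor E = B \<longleftrightarrow> E \<subseteq> tree_edge ` (V - {w}) \<and> (\<forall>v\<in>V - {w}. slack \<delta> a b v = 0)"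
proof -
  let ?T = "tree_edge ` (V - {w})"
  define X where "X = (\<Sum>e\<in>E - ?T. sqrt (\<Sum>v\<in>e. (real (deg E v))\<^sup>2))"
  define Y where "Y = (\<Sum>v\<in>V - {w}. slack \<delta> a b v)"
  have finE: "finite (E - ?T)"
    using simple_graph_finite_edges[OF simple] by simp
  have nonneg: "0 \<le> sqrt (\<Sum>v\<in>e. (real (deg E v))\<^sup>2)" for e
    by (simp add: sum_nonneg)
  have "X = 0 \<longleftrightarrow> (\<forall>e\<in>E - ?T. sqrt (\<Sum>v\<in>e. (real (deg E v))\<^sup>2) = 0)"
    unfolding X_def using finE nonneg by (rule sum_nonneg_eq_0_iff)
  also have "\<dots> \<longleftrightarrow> E - ?T = {}"
    using sombor_edge_weight_pos[OF simple]
    by (fastforce simp del: real_sqrt_gt_0_iff real_sqrt_eq_0_iff)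
  also have "\<dots> \<longleftrightarrow> E \<subseteq> ?T"
    by blast
  finally have "0 \<le> X" "X = 0 \<longleftrightarrow> E \<subseteq> ?T"
    unfolding X_def using nonneg by (simp_all add: sum_nonneg)
  moreover have "0 \<le> Y" "Y = 0 \<longleftrightarrow> (\<forall>v\<in>V - {w}. slack \<delta> a b v = 0)"
    unfolding Y_def using slack_nonneg sum_nonneg_eq_0_iff[of "V - {w}"] finite_V
    by (auto intro: sum_nonneg)
  moreover have "sombor E = X + Y + B"
    unfolding X_def Y_def B_def using sombor_eq_slack_sum[of \<delta> a b] by linarith
  ultimately show "B \<le> sombor E"
    and "sombor E = B \<longleftrightarrow> E \<subseteq> ?T \<and> (\<forall>v\<in>V - {w}. slack \<delta> a b v = 0)"
    by auto
qed

lemma slack_i: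
  assumes v: "v \<in> V - {w}"
  defines "\<delta> \<equiv> 2 * sqrt 2 - sqrt 5"
  defines "s \<equiv> slack \<delta> (sqrt ((real \<Delta>)\<^sup>2 + 4) - \<delta>) (sqrt 5) v"
  shows "0 \<le> s"
    and "E \<subseteq> tree_edge ` (V - {w}) \<Longrightarrow>
      s = 0 \<longleftrightarrow> (if p v = w then deg E v = 2 else deg E v \<le> 2 \<and> deg E (p v) = 2)"
proof -
  let ?k = "deg E v" and ?c = "card (children v)"
  have kc: "?c + 1 \<le> ?k"
    using card_children_less_deg[OF v] .
  have "0 \<le> s \<and> (s = 0 \<longleftrightarrow>
      (if p v = w then ?k = 2 \<and> ?c = 1 else deg E (p v) = 2 \<and> (?k = 1 \<or> ?k = 2 \<and> ?c = 1)))"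
  proof (cases "p v = w")
    case True
    have gap: "sqrt ((real \<Delta>)\<^sup>2 + 4) - sqrt ((real \<Delta>)\<^sup>2 + 1) < \<delta>"
      unfolding \<delta>_def using three_le_deg_root
      by (intro sqrt_add_4_minus_sqrt_add_1_bounds) simp
    have "s = (sqrt ((real ?k)\<^sup>2 + (real \<Delta>)\<^sup>2) + (if 3 \<le> ?k then \<delta> * real ?c else 0))
        - (sqrt ((real \<Delta>)\<^sup>2 + 4) - \<delta> + \<delta> * real ?c)"
      using True deg_root unfolding s_def slack_def by simp
    then show ?thesis
      using diff_nonneg_iff_of_if[OF root_child_ineq_i[OF kc gap]] True by simp
  next
    case False
    have "s = (sqrt ((real ?k)\<^sup>2 + (real (deg E (p v)))\<^sup>2) - (if 3 \<le> deg E (p v) then \<delta> else 0)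
              + (if 3 \<le> ?k then \<delta> * real ?c else 0)) - (sqrt 5 + \<delta> * real ?c)"
      using False unfolding s_def slack_def by simp
    then show ?thesis
      using diff_nonneg_iff_of_if[OF deeper_ineq_i[OF kc two_le_deg_parent[OF v False]]] False
      unfolding \<delta>_def by simp
  qed
  then show "0 \<le> s"
    and "E \<subseteq> tree_edge ` (V - {w}) \<Longrightarrow>
      s = 0 \<longleftrightarrow> (if p v = w then ?k = 2 else ?k \<le> 2 \<and> deg E (p v) = 2)"
    using deg_eq_card_children[OF _ v] by auto
qed

lemma slack_ii:
  assumes v: "v \<in> V - {w}"
  defines "\<gamma> \<equiv> sqrt ((real \<Delta>)\<^sup>2 + 4) - sqrt ((real \<Delta>)\<^sup>2 + 1)"
  defines "s \<equiv> slack \<gamma> (sqrt ((real \<Delta>)\<^sup>2 + 1)) (sqrt 5) v"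
  shows "0 \<le> s"
    and "E \<subseteq> tree_edge ` (V - {w}) \<Longrightarrow>
      s = 0 \<longleftrightarrow> (if p v = w then deg E v \<le> 2 else deg E v = 1 \<and> deg E (p v) = 2)"
proof -
  let ?k = "deg E v" and ?c = "card (children v)"
  have kc: "?c + 1 \<le> ?k"
    using card_children_less_deg[OF v] .
  have "0 \<le> s \<and> (s = 0 \<longleftrightarrow>
      (if p v = w then ?k = 1 \<or> ?k = 2 \<and> ?c = 1 else ?k = 1 \<and> deg E (p v) = 2))"
  proof (cases "p v = w")
    case True
    have "s = (sqrt ((real ?k)\<^sup>2 + (real \<Delta>)\<^sup>2) + (if 3 \<le> ?k then \<gamma> * real ?c else 0))
        - (sqrt ((real \<Delta>)\<^sup>2 + 1) + \<gamma> * real ?c)"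
      using True deg_root unfolding s_def slack_def by simp
    then show ?thesis
      using diff_nonneg_iff_of_if[OF root_child_ineq_ii[OF kc]] True unfolding \<gamma>_def by simp
  next
    case False
    have "s = (sqrt ((real ?k)\<^sup>2 + (real (deg E (p v)))\<^sup>2) - (if 3 \<le> deg E (p v) then \<gamma> else 0)
              + (if 3 \<le> ?k then \<gamma> * real ?c else 0)) - (sqrt 5 + \<gamma> * real ?c)"
      using False unfolding s_def slack_def by simp
    moreover have "0 < \<gamma>" "\<gamma> < 2 * sqrt 2 - sqrt 5"
      unfolding \<gamma>_def using three_le_deg_root
      by (intro sqrt_add_4_minus_sqrt_add_1_bounds; simp)+
    ultimately show ?thesis
      using diff_nonneg_iff_of_if[OF deeper_ineq_ii[OF kc two_le_deg_parent[OF v False]]] False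
      by simp
  qed
  then show "0 \<le> s"
    and "E \<subseteq> tree_edge ` (V - {w}) \<Longrightarrow>
      s = 0 \<longleftrightarrow> (if p v = w then ?k \<le> 2 else ?k = 1 \<and> deg E (p v) = 2)"
    using deg_eq_card_children[OF _ v] by auto
qed

lemma star_like_tree_iff:
  "star_like_tree V E \<longleftrightarrow> E \<subseteq> tree_edge ` (V - {w}) \<and> (\<forall>v\<in>V - {w}. deg E v \<le> 2)"
proof -
  let ?H = "{v \<in> V. 2 < deg E v}"
  have "w \<in> ?H"
    using root_in_V deg_root three_le_deg_root by simp
  have "card ?H = 1 \<longleftrightarrow> ?H = {w}"
  proof
    assume "card ?H = 1"
    then obtain x where "?H = {x}"
      by (rule card_1_singletonE)
    with \<open>w \<in> ?H\<close> show "?H = {w}"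
      by simp
  qed simp
  also have "\<dots> \<longleftrightarrow> (\<forall>v\<in>V - {w}. deg E v \<le> 2)"
  proof
    assume "?H = {w}"
    then show "\<forall>v\<in>V - {w}. deg E v \<le> 2"
      by (metis (no_types, lifting) DiffE mem_Collect_eq not_le singletonI)
  next
    assume "\<forall>v\<in>V - {w}. deg E v \<le> 2"
    then have "?H \<subseteq> {w}"
      by (auto simp: not_le[symmetric])
    with \<open>w \<in> ?H\<close> show "?H = {w}"
      by blast
  qed
  finally show ?thesis
    unfolding star_like_tree_def is_tree_iff by simp
qed

lemma deg_eq_root_deg_iff:
  assumes "\<forall>v\<in>V - {w}. deg E v \<le> 2" "x \<in> V"
  shows "deg E x = \<Delta> \<longleftrightarrow> x = w"
proof
  assume "deg E x = \<Delta>"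
  show "x = w"
  proof (rule ccontr)
    assume "x \<noteq> w"
    then have "deg E x \<le> 2"
      using assms by blast
    then show False
      using \<open>deg E x = \<Delta>\<close> three_le_deg_root by simp
  qed
qed (simp add: deg_root)

lemma deg_parent_eq_2:
  assumes "\<forall>v\<in>V - {w}. deg E v \<le> 2" "v \<in> V - {w}" "p v \<noteq> w"
  shows "deg E (p v) = 2"
proof -
  have "p v \<in> V - {w}"
    using parent_in_V assms(2,3) by simp
  then have "deg E (p v) \<le> 2"
    using assms(1) by blast
  then show ?thesis
    using two_le_deg_parent[OF assms(2,3)] by simp
qed

lemma card_leaf_children_root:
  assumes tree: "E \<subseteq> tree_edge ` (V - {w})" and low: "\<forall>v\<in>V - {w}. deg E v \<le> 2"
  shows "card {u. adj E w u \<and> deg E u = 1} + card (V - {w})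
    = 2 * \<Delta> + (\<Sum>v\<in>V - {w} - children w. card (children v))"
proof -
  let ?N = "children w"
  have N: "?N \<subseteq> V - {w}"
    unfolding children_def by blast
  have "(\<Sum>v\<in>?N. card (children v)) = (\<Sum>v\<in>?N. of_bool (deg E v \<noteq> 1))"
  proof (rule sum.cong)
    fix v
    assume "v \<in> ?N"
    then have "v \<in> V - {w}"
      using N by blast
    then have "deg E v = card (children v) + 1" "deg E v \<le> 2"
      using deg_eq_card_children[OF tree] low by simp_all
    then show "card (children v) = of_bool (deg E v \<noteq> 1)"
      by auto
  qed simp
  also have "\<dots> = card (?N \<inter> {v. deg E v \<noteq> 1})"
    using finite_children by simp
  moreover have "{u. adj E w u \<and> deg E u = 1} = ?N - {v. deg E v \<noteq> 1}"
    using children_root by auto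
  ultimately have "card {u. adj E w u \<and> deg E u = 1} + (\<Sum>v\<in>?N. card (children v)) = \<Delta>"
    using card_Int_Diff[OF finite_children, of w "{v. deg E v \<noteq> 1}"]
      card_children_root deg_root by simp
  moreover have "(\<Sum>v\<in>V - {w}. card (children v))
      = (\<Sum>v\<in>?N. card (children v)) + (\<Sum>v\<in>V - {w} - ?N. card (children v))"
    using sum.subset_diff[OF N] finite_V by (simp add: add.commute)
  ultimately show ?thesis
    using sum_card_children deg_root by simp
qed

lemma leaves_iff_card_leaf_children_root:
  assumes tree: "E \<subseteq> tree_edge ` (V - {w})" and low: "\<forall>v\<in>V - {w}. deg E v \<le> 2"
  shows "(\<forall>v\<in>V - {w} - children w. deg E v = 1)
    \<longleftrightarrow> card {u. adj E w u \<and> deg E u = 1} + card (V - {w}) = 2 * \<Delta>"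
proof -
  have "(\<forall>v\<in>V - {w} - children w. deg E v = 1)
      \<longleftrightarrow> (\<forall>v\<in>V - {w} - children w. card (children v) = 0)"
    using deg_eq_card_children[OF tree] by auto
  also have "\<dots> \<longleftrightarrow> (\<Sum>v\<in>V - {w} - children w. card (children v)) = 0"
    using finite_V by simp
  finally show ?thesis
    using card_leaf_children_root[OF tree low] by linarith
qed

theorem sombor_lower_bound_i:
  defines "B \<equiv> real \<Delta> * (sqrt ((real \<Delta>)\<^sup>2 + 4) + sqrt 5)
                + 2 * (real (card V) - 2 * real \<Delta> - 1) * sqrt 2"
  shows "B \<le> sombor E"
    and "sombor E = B \<longleftrightarrow> star_like_tree V E
           \<and> (\<forall>x\<in>V. deg E x = \<Delta> \<longrightarrow> (\<forall>u. adj E x u \<longrightarrow> deg E u = 2))"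
proof -
  define \<delta> where "\<delta> = 2 * sqrt 2 - sqrt 5"
  let ?T = "tree_edge ` (V - {w})"
  note slack = slack_i[folded \<delta>_def]
  have B: "B = real \<Delta> * (sqrt ((real \<Delta>)\<^sup>2 + 4) - \<delta>) + (real (card V) - 1 - real \<Delta>) * (sqrt 5 + \<delta>)"
    unfolding B_def \<delta>_def by (simp add: algebra_simps)
  note bound = sombor_lower_bound_of_slack[OF slack(1), folded B]
  then show "B \<le> sombor E"
    by blast
  have "sombor E = B \<longleftrightarrow> E \<subseteq> ?T
      \<and> (\<forall>v\<in>V - {w}. if p v = w then deg E v = 2 else deg E v \<le> 2 \<and> deg E (p v) = 2)"
    using bound(2) slack(2) by blast
  also have "\<dots> \<longleftrightarrow> E \<subseteq> ?T \<and> (\<forall>v\<in>V - {w}. deg E v \<le> 2) \<and> (\<forall>u. adj E w u \<longrightarrow> deg E u = 2)"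
    using deg_parent_eq_2 adj_root_iff by (auto split: if_splits)
  also have "\<dots> \<longleftrightarrow> star_like_tree V E
      \<and> (\<forall>x\<in>V. deg E x = \<Delta> \<longrightarrow> (\<forall>u. adj E x u \<longrightarrow> deg E u = 2))"
    using star_like_tree_iff deg_eq_root_deg_iff root_in_V deg_root by auto
  finally show "sombor E = B \<longleftrightarrow> star_like_tree V E
      \<and> (\<forall>x\<in>V. deg E x = \<Delta> \<longrightarrow> (\<forall>u. adj E x u \<longrightarrow> deg E u = 2))" .
qed

theorem sombor_lower_bound_ii:
  defines "B \<equiv> (real (card V) - 1 - real \<Delta>) * (sqrt ((real \<Delta>)\<^sup>2 + 4) + sqrt 5)
                + (2 * real \<Delta> - real (card V) + 1) * sqrt ((real \<Delta>)\<^sup>2 + 1)"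
  shows "B \<le> sombor E"
    and "sombor E = B \<longleftrightarrow> star_like_tree V E
           \<and> (\<forall>x\<in>V. deg E x = \<Delta> \<longrightarrow>
                real (card {u. adj E x u \<and> deg E u = 1}) = 2 * real \<Delta> - real (card V) + 1)"
proof -
  define \<gamma> where "\<gamma> = sqrt ((real \<Delta>)\<^sup>2 + 4) - sqrt ((real \<Delta>)\<^sup>2 + 1)"
  let ?T = "tree_edge ` (V - {w})"
  let ?leaves = "\<lambda>x. card {u. adj E x u \<and> deg E u = 1}"
  note slack = slack_ii[folded \<gamma>_def]
  have B: "B = real \<Delta> * sqrt ((real \<Delta>)\<^sup>2 + 1) + (real (card V) - 1 - real \<Delta>) * (sqrt 5 + \<gamma>)"
    unfolding B_def \<gamma>_def by (simp add: algebra_simps)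
  note bound = sombor_lower_bound_of_slack[OF slack(1), folded B]
  then show "B \<le> sombor E"
    by blast
  have "sombor E = B \<longleftrightarrow> E \<subseteq> ?T
      \<and> (\<forall>v\<in>V - {w}. if p v = w then deg E v \<le> 2 else deg E v = 1 \<and> deg E (p v) = 2)"
    using bound(2) slack(2) by blast
  also have "\<dots> \<longleftrightarrow> E \<subseteq> ?T \<and> (\<forall>v\<in>V - {w}. deg E v \<le> 2)
      \<and> (\<forall>v\<in>V - {w} - children w. deg E v = 1)"
  proof (intro conj_cong refl iffI)
    assume H: "\<forall>v\<in>V - {w}. if p v = w then deg E v \<le> 2 else deg E v = 1 \<and> deg E (p v) = 2"
    have "deg E v \<le> 2" if "v \<in> V - {w}" for v
      using H[rule_format, OF that] by (auto split: if_splits)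
    moreover have "deg E v = 1" if "v \<in> V - {w} - children w" for v
      using H[rule_format, of v] that unfolding children_def by auto
    ultimately show "(\<forall>v\<in>V - {w}. deg E v \<le> 2) \<and> (\<forall>v\<in>V - {w} - children w. deg E v = 1)"
      by blast
  qed (use deg_parent_eq_2 in \<open>auto simp: children_def\<close>)
  also have "\<dots> \<longleftrightarrow> E \<subseteq> ?T \<and> (\<forall>v\<in>V - {w}. deg E v \<le> 2)
      \<and> ?leaves w + card (V - {w}) = 2 * \<Delta>"
    using leaves_iff_card_leaf_children_root by blast
  also have "\<dots> \<longleftrightarrow> star_like_tree V E
      \<and> (\<forall>x\<in>V. deg E x = \<Delta> \<longrightarrow> real (?leaves x) = 2 * real \<Delta> - real (card V) + 1)"
    using star_like_tree_iff deg_eq_root_deg_iff root_in_V deg_root card_V by auto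
  finally show "sombor E = B \<longleftrightarrow> star_like_tree V E
      \<and> (\<forall>x\<in>V. deg E x = \<Delta> \<longrightarrow> real (?leaves x) = 2 * real \<Delta> - real (card V) + 1)" .
qed

end

theorem theorem2p2:
  fixes V :: "'a set" and E :: "'a set set" and n \<Delta> :: nat
  assumes "simple_graph V E" and "connected_graph V E"
    and "n = card V" and "\<Delta> = max_deg V E" and "\<Delta> \<ge> 3"
  shows "(2 * \<Delta> \<le> n - 1 \<longrightarrow>
            sombor E \<ge> \<Delta> * (sqrt (\<Delta>\<^sup>2 + 4) + sqrt 5) + 2 * (real n - 2 * \<Delta> - 1) * sqrt 2
          \<and> (sombor E = \<Delta> * (sqrt (\<Delta>\<^sup>2 + 4) + sqrt 5) + 2 * (real n - 2 * \<Delta> - 1) * sqrt 2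
              \<longleftrightarrow> star_like_tree V E \<and>
                  (\<forall>w\<in>V. deg E w = \<Delta> \<longrightarrow> (\<forall>u. adj E w u \<longrightarrow> deg E u = 2))))
       \<and> (2 * \<Delta> > n - 1 \<longrightarrow>
            sombor E \<ge> (real n - 1 - \<Delta>) * (sqrt (\<Delta>\<^sup>2 + 4) + sqrt 5)
                        + (2 * \<Delta> - real n + 1) * sqrt (\<Delta>\<^sup>2 + 1)
          \<and> (sombor E = (real n - 1 - \<Delta>) * (sqrt (\<Delta>\<^sup>2 + 4) + sqrt 5)
                        + (2 * \<Delta> - real n + 1) * sqrt (\<Delta>\<^sup>2 + 1)
              \<longleftrightarrow> star_like_tree V E \<and>
                  (\<forall>w\<in>V. deg E w = \<Delta> \<longrightarrow>
                     real (card {u. adj E w u \<and> deg E u = 1}) = 2 * \<Delta> - real n + 1)))"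
proof -
  have "finite V" "V \<noteq> {}"
    using assms(1,2) unfolding simple_graph_def connected_graph_def by auto
  then have "max_deg V E \<in> deg E ` V"
    unfolding max_deg_def by simp
  then obtain w where w: "w \<in> V" "deg E w = \<Delta>"
    using assms(4) by auto
  obtain p rank where "bfs_tree V E w p rank"
    using connected_graph_bfs_tree[OF assms(1,2) w(1)] .
  then interpret sombor_bfs V E w p rank \<Delta>
    using w(2) assms(5) by (simp add: sombor_bfs_def sombor_bfs_axioms_def)
  have casts: "real (\<Delta>\<^sup>2 + 4) = (real \<Delta>)\<^sup>2 + 4" "real (\<Delta>\<^sup>2 + 1) = (real \<Delta>)\<^sup>2 + 1"
    "real (2 * \<Delta>) = 2 * real \<Delta>"
    by simp_all
  show ?thesis
    unfolding casts assms(3) using sombor_lower_bound_i sombor_lower_bound_ii by blast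
qed

end
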